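(* Let $a,b,c\ge 2$ be integers. Then the ring $A=\mathbb{C}[X,Y,Z]/(X^aY^b-Z^c)$ is rigid (this includes the cases where $\gcd(a,b,c)>1$, in which $A$ is not a domain).
   Context: A locally nilpotent derivation (LND) of a $\mathbb{C}$-algebra $A$ is a $\mathbb{C}$-linear derivation $D$ such that every $a\in A$ satisfies $D^n(a)=0$ for some $n$. A ring is rigid if its only LND is the zero derivation. *)

theory Defs
  imports "HOL-Computational_Algebra.Polynomial"
begin

text \<open>The polynomial ring C[X,Y,Z], realised as iterated univariate polynomials:
  X is the innermost variable, Y the middle one, Z the outermost.\<close>
type_synonym cpoly3 = "complex poly poly poly"

definition varX :: cpoly3 where "varX = [:[:[:0, 1:]:]:]"
definition varY :: cpoly3 where "varY = [:[:0, 1:]:]"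
definition varZ :: cpoly3 where "varZ = [:0, 1:]"
definition const3 :: "complex \<Rightarrow> cpoly3" where "const3 c = [:[:[:c:]:]:]"

text \<open>Maps of the quotient A = C[X,Y,Z]/(f) are represented by maps D on C[X,Y,Z]
  that respect congruence modulo the principal ideal (f); all identities are
  required modulo (f), i.e. in A.\<close>
definition quot_derivation :: "cpoly3 \<Rightarrow> (cpoly3 \<Rightarrow> cpoly3) \<Rightarrow> bool" where
  "quot_derivation f D \<longleftrightarrow>
     (\<forall>g h. f dvd (g - h) \<longrightarrow> f dvd (D g - D h)) \<and>
     (\<forall>g h. f dvd (D (g + h) - (D g + D h))) \<and>
     (\<forall>c g. f dvd (D (const3 c * g) - const3 c * D g)) \<and>
     (\<forall>g h. f dvd (D (g * h) - (g * D h + h * D g)))"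

definition quot_LND :: "cpoly3 \<Rightarrow> (cpoly3 \<Rightarrow> cpoly3) \<Rightarrow> bool" where
  "quot_LND f D \<longleftrightarrow> quot_derivation f D \<and> (\<forall>g. \<exists>n. f dvd (D ^^ n) g)"

definition quot_rigid :: "cpoly3 \<Rightarrow> bool" where
  "quot_rigid f \<longleftrightarrow> (\<forall>D. quot_LND f D \<longrightarrow> (\<forall>g. f dvd D g))"

end

theory Submission
  imports Defs "HOL-Library.Poly_Mapping" "HOL-Library.Product_Lexorder" "HOL-Library.Product_Plus"
begin

text \<open>
  Let L = C[s^(+-1), t^(+-1)] be the ring of Laurent polynomials in two variables.  For every
  c-th root of unity z the substitution X := s^c, Y := t^c, Z := z s^a t^b defines a ring
  homomorphism psi z from C[X,Y,Z] to L killing f = X^a Y^b - Z^c, and these c homomorphisms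
  jointly detect divisibility by f: if psi z h = 0 for all z then f divides h (reduce h modulo f
  to Z-degree below c and invert the discrete Fourier transform over the roots of unity).

  Given a locally nilpotent derivation D of A, the map psi z \<circ> D is a derivation along psi z.
  It extends to a derivation delta of L; being a derivation of L, delta has the form
  U s d/ds + V t d/dt, and the relation X^a Y^b = Z^c determines its value on z s^a t^b.
  Iterating delta on the monomials s^c and t^c and reading off the coefficient at the
  lexicographically largest exponent shows that local nilpotency forces a product of linear
  forms in the top coefficients of U and V to vanish.  A combinatorial analysis of these top
  coefficients, using the discrete Fourier transform once more, shows that U = V = 0 for every
  root of unity, hence psi z (D g) = 0 for all z and f divides D g, i.e. D = 0 on A.
\<close>

section \<open>Ring homomorphisms and generators of C[X,Y,Z]\<close>

definition is_hom :: "('a::comm_ring_1 \<Rightarrow> 'b::comm_ring_1) \<Rightarrow> bool" where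
  "is_hom \<phi> \<longleftrightarrow> (\<forall>x y. \<phi> (x + y) = \<phi> x + \<phi> y) \<and> (\<forall>x y. \<phi> (x * y) = \<phi> x * \<phi> y) \<and> \<phi> 1 = 1"

lemma is_hom_add: "is_hom \<phi> \<Longrightarrow> \<phi> (x + y) = \<phi> x + \<phi> y"
  and is_hom_mult: "is_hom \<phi> \<Longrightarrow> \<phi> (x * y) = \<phi> x * \<phi> y"
  and is_hom_1: "is_hom \<phi> \<Longrightarrow> \<phi> 1 = 1"
  by (simp_all add: is_hom_def)

lemma is_hom_0: "is_hom \<phi> \<Longrightarrow> \<phi> 0 = 0"
  using is_hom_add[of \<phi> 0 0] by simp

lemma is_hom_diff: "is_hom \<phi> \<Longrightarrow> \<phi> (x - y) = \<phi> x - \<phi> y"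
  using is_hom_add[of \<phi> "x - y" y] by (simp add: eq_diff_eq)

lemma is_hom_power: "is_hom \<phi> \<Longrightarrow> \<phi> (x ^ n) = \<phi> x ^ n"
  by (induction n) (simp_all add: is_hom_1 is_hom_mult)

lemma is_hom_sum: "is_hom \<phi> \<Longrightarrow> \<phi> (sum g A) = (\<Sum>x\<in>A. \<phi> (g x))"
  by (induction A rule: infinite_finite_induct) (simp_all add: is_hom_0 is_hom_add)

text \<open>Applying a homomorphism to the coefficients and then evaluating at a point is again a
  homomorphism; this is how substitution homomorphisms on iterated polynomials are built.\<close>
lemma is_hom_eval_map_poly:
  assumes "is_hom \<phi>" shows "is_hom (\<lambda>p. poly (map_poly \<phi> p) x)"
proof -
  have "map_poly \<phi> (p + q) = map_poly \<phi> p + map_poly \<phi> q" for p q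
    by (rule poly_eqI) (simp add: coeff_map_poly is_hom_0[OF assms] is_hom_add[OF assms])
  moreover have "map_poly \<phi> (p * q) = map_poly \<phi> p * map_poly \<phi> q" for p q
    by (rule poly_eqI)
      (simp add: coeff_map_poly coeff_mult is_hom_0[OF assms] is_hom_sum[OF assms] is_hom_mult[OF assms])
  ultimately show ?thesis
    by (simp add: is_hom_def is_hom_1[OF assms])
qed

text \<open>C[X,Y,Z] is generated from the constants by addition and multiplication with X, Y, Z;
  maps satisfying Leibniz rules are therefore determined by their values on X, Y, Z.\<close>
lemma cpoly3_induct:
  assumes C: "\<And>\<alpha>. P (const3 \<alpha>)" and A: "\<And>g h. P g \<Longrightarrow> P h \<Longrightarrow> P (g + h)"
    and X: "\<And>g. P g \<Longrightarrow> P (varX * g)" and Y: "\<And>g. P g \<Longrightarrow> P (varY * g)"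
    and Z: "\<And>g. P g \<Longrightarrow> P (varZ * g)"
  shows "P h"
proof -
  have P0: "P 0" using C[of 0] by (simp add: const3_def)
  have PX: "P [:[:r:]:]" for r
  proof (induction r)
    case (pCons \<alpha> r)
    have "[:[:pCons \<alpha> r:]:] = const3 \<alpha> + varX * [:[:r:]:]" by (simp add: const3_def varX_def)
    then show ?case using A C X pCons(2) by metis
  qed (use P0 in simp)
  have PXY: "P [:q:]" for q
  proof (induction q)
    case (pCons r q)
    have "[:pCons r q:] = [:[:r:]:] + varY * [:q:]" by (simp add: varY_def)
    then show ?case using A PX Y pCons(2) by metis
  qed (use P0 in simp)
  show "P h"
  proof (induction h)
    case (pCons q h)
    have "pCons q h = [:q:] + varZ * h" by (simp add: varZ_def)
    then show ?case using A PXY Z pCons(2) by metis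
  qed (use P0 in simp)
qed

section \<open>Laurent polynomials in two variables\<close>

text \<open>C[s^(+-1), t^(+-1)] as finitely supported functions from exponent pairs to coefficients;
  exponent pairs are ordered lexicographically.\<close>
type_synonym laurent = "(int \<times> int) \<Rightarrow>\<^sub>0 complex"

abbreviation coeffL :: "laurent \<Rightarrow> int \<times> int \<Rightarrow> complex" where
  "coeffL F k \<equiv> Poly_Mapping.lookup F k"

abbreviation monoL :: "int \<times> int \<Rightarrow> complex \<Rightarrow> laurent" where
  "monoL k \<alpha> \<equiv> Poly_Mapping.single k \<alpha>"

abbreviation exps_le :: "laurent \<Rightarrow> int \<times> int \<Rightarrow> bool" where
  "exps_le F e \<equiv> (\<forall>k\<in>Poly_Mapping.keys F. k \<le> e)"

lemma lex_le_iff: "(x::int\<times>int) \<le> y \<longleftrightarrow> fst x < fst y \<or> (fst x = fst y \<and> snd x \<le> snd y)"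
  by (cases x; cases y) auto

lemma lex_add_mono: "(x::int\<times>int) \<le> y \<Longrightarrow> z \<le> w \<Longrightarrow> x + z \<le> y + w"
  unfolding lex_le_iff by auto

lemma lex_add_eq: "(x::int\<times>int) \<le> y \<Longrightarrow> z \<le> w \<Longrightarrow> x + z = y + w \<Longrightarrow> x = y \<and> z = w"
  unfolding lex_le_iff by (cases x; cases y; cases z; cases w) auto

lemma Sum_any_shift: "Sum_any (\<lambda>q. coeffL F q when m = l + q) = coeffL F (m - l)"
proof -
  have "\<And>q. (m = l + q) = (q = m - l)" by (auto simp: algebra_simps)
  then show ?thesis by simp
qed

lemma coeffL_mono_mult: "coeffL (monoL k \<alpha> * F) m = \<alpha> * coeffL F (m - k)"
  unfolding Poly_Mapping.lookup_mult Poly_Mapping.lookup_single Sum_any_shift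
  by (simp add: when_mult)

lemma coeffL_mult_mono: "coeffL (F * monoL k \<alpha>) m = \<alpha> * coeffL F (m - k)"
  by (simp add: mult.commute[of F] coeffL_mono_mult)

lemma coeffL_of_nat_mult: "coeffL (of_nat n * F) m = of_nat n * coeffL F m"
  using coeffL_mono_mult[of 0 "of_nat n" F m] by simp

lemma mono_power: "monoL (x, y) \<alpha> ^ n = monoL (int n * x, int n * y) (\<alpha> ^ n)"
  by (induction n) (simp_all add: Poly_Mapping.mult_single algebra_simps zero_prod_def[symmetric])

text \<open>The lexicographic order is compatible with addition, so the top coefficient of a product
  is the product of the top coefficients.\<close>
lemma coeffL_mult_top:
  assumes F: "exps_le F p" and G: "exps_le G q"
  shows "exps_le (F * G) (p + q)" and "coeffL (F * G) (p + q) = coeffL F p * coeffL G q"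
proof -
  show "exps_le (F * G) (p + q)"
    using Poly_Mapping.keys_mult[of F G] F G lex_add_mono by blast
  have only_top: "coeffL F l * coeffL G (p + q - l) = 0" if "l \<noteq> p" for l
  proof (rule ccontr)
    assume "\<not> ?thesis"
    then have "l \<le> p" "p + q - l \<le> q" using F G by (auto simp: Poly_Mapping.in_keys_iff)
    then show False using lex_add_eq[of l p "p + q - l" q] that by simp
  qed
  have "coeffL (F * G) (p + q) = Sum_any (\<lambda>l. coeffL F l * coeffL G (p + q - l))"
    unfolding Poly_Mapping.lookup_mult Sum_any_shift ..
  also have "\<dots> = Sum_any (\<lambda>l. coeffL F p * coeffL G q when l = p)"
    by (rule Sum_any.cong) (use only_top in \<open>auto simp: when_def\<close>)
  finally show "coeffL (F * G) (p + q) = coeffL F p * coeffL G q" by simp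
qed

lemma poly_mapping_single_induct:
  assumes "P 0" "\<And>f a b. P f \<Longrightarrow> P (f + Poly_Mapping.single a b)"
  shows "P f"
proof (induction f rule: Poly_Mapping.update_induct)
  case (update f a b)
  have "Poly_Mapping.update a b f = f + Poly_Mapping.single a b"
    using update(1) by (intro Poly_Mapping.poly_mapping_eqI)
       (auto simp: Poly_Mapping.lookup_update Poly_Mapping.lookup_add Poly_Mapping.lookup_single
         Poly_Mapping.in_keys_iff when_def)
  then show ?case using assms(2) update(3) by simp
qed (use assms in simp)

text \<open>Multiplying each coefficient by an additive weight of its exponent is a derivation of L;
  the weights fst and snd give the Euler derivations s d/ds and t d/dt.\<close>
definition euler_weight :: "(int \<times> int \<Rightarrow> complex) \<Rightarrow> laurent \<Rightarrow> laurent" where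
  "euler_weight w F = Poly_Mapping.mapp (\<lambda>k v. w k * v) F"

lemma coeffL_euler_weight: "coeffL (euler_weight w F) k = w k * coeffL F k"
  by (simp add: euler_weight_def Poly_Mapping.lookup_mapp when_def Poly_Mapping.in_keys_iff)

lemma euler_weight_add: "euler_weight w (F + G) = euler_weight w F + euler_weight w G"
  by (intro Poly_Mapping.poly_mapping_eqI) (simp add: coeffL_euler_weight Poly_Mapping.lookup_add algebra_simps)

lemma euler_weight_0: "euler_weight w 0 = 0"
  by (intro Poly_Mapping.poly_mapping_eqI) (simp add: coeffL_euler_weight)

lemma euler_weight_mono: "euler_weight w (monoL k \<alpha>) = monoL k (w k * \<alpha>)"
  by (intro Poly_Mapping.poly_mapping_eqI) (simp add: coeffL_euler_weight Poly_Mapping.lookup_single when_def)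

lemma exps_le_euler_weight: "exps_le F e \<Longrightarrow> exps_le (euler_weight w F) e"
  using Poly_Mapping.keys_mapp_subset[of _ F] unfolding euler_weight_def by blast

lemma euler_weight_mult:
  assumes w: "\<And>k l. w (k + l) = w k + w l"
  shows "euler_weight w (F * G) = euler_weight w F * G + F * euler_weight w G"
proof (induction F rule: poly_mapping_single_induct)
  case (2 F a \<alpha>)
  have "euler_weight w (monoL a \<alpha> * G) = euler_weight w (monoL a \<alpha>) * G + monoL a \<alpha> * euler_weight w G"
  proof (induction G rule: poly_mapping_single_induct)
    case (2 G b \<beta>)
    have "euler_weight w (monoL a \<alpha> * monoL b \<beta>) =
        euler_weight w (monoL a \<alpha>) * monoL b \<beta> + monoL a \<alpha> * euler_weight w (monoL b \<beta>)"
      by (simp add: euler_weight_mono Poly_Mapping.mult_single w algebra_simps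
          Poly_Mapping.single_add[symmetric])
    then show ?case using 2 by (simp add: euler_weight_add algebra_simps)
  qed (simp add: euler_weight_0)
  then show ?case using 2 by (simp add: euler_weight_add algebra_simps)
qed (simp add: euler_weight_0)

definition euler_s :: "laurent \<Rightarrow> laurent" where "euler_s = euler_weight (\<lambda>k. of_int (fst k))"
definition euler_t :: "laurent \<Rightarrow> laurent" where "euler_t = euler_weight (\<lambda>k. of_int (snd k))"

definition euler_der :: "laurent \<Rightarrow> laurent \<Rightarrow> laurent \<Rightarrow> laurent" where
  "euler_der U V F = U * euler_s F + V * euler_t F"

lemma euler_der_add: "euler_der U V (F + G) = euler_der U V F + euler_der U V G"
  by (simp add: euler_der_def euler_s_def euler_t_def euler_weight_add algebra_simps)

lemma euler_der_mult: "euler_der U V (F * G) = euler_der U V F * G + F * euler_der U V G"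
  by (simp add: euler_der_def euler_s_def euler_t_def euler_weight_mult algebra_simps)

lemma euler_der_mono:
  "euler_der U V (monoL k \<alpha>) = U * monoL k (of_int (fst k) * \<alpha>) + V * monoL k (of_int (snd k) * \<alpha>)"
  unfolding euler_der_def euler_s_def euler_t_def euler_weight_mono ..

lemma euler_der_top:
  assumes U: "exps_le U e" and V: "exps_le V e" and F: "exps_le F h"
  shows "exps_le (euler_der U V F) (e + h)"
    and "coeffL (euler_der U V F) (e + h) =
      coeffL F h * (coeffL U e * of_int (fst h) + coeffL V e * of_int (snd h))"
proof -
  have Es: "exps_le (euler_s F) h" and Et: "exps_le (euler_t F) h"
    using F by (simp_all add: euler_s_def euler_t_def exps_le_euler_weight)
  show "exps_le (euler_der U V F) (e + h)"
    using coeffL_mult_top(1)[OF U Es] coeffL_mult_top(1)[OF V Et]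
      Poly_Mapping.keys_add[of "U * euler_s F" "V * euler_t F"]
    unfolding euler_der_def by blast
  show "coeffL (euler_der U V F) (e + h) =
      coeffL F h * (coeffL U e * of_int (fst h) + coeffL V e * of_int (snd h))"
    unfolding euler_der_def Poly_Mapping.lookup_add coeffL_mult_top(2)[OF U Es] coeffL_mult_top(2)[OF V Et]
    by (simp add: euler_s_def euler_t_def coeffL_euler_weight algebra_simps)
qed

lemma euler_der_iterate_top:
  assumes U: "exps_le U e" and V: "exps_le V e"
  shows "exps_le ((euler_der U V ^^ n) (monoL h 1)) (fst h + int n * fst e, snd h + int n * snd e) \<and>
    coeffL ((euler_der U V ^^ n) (monoL h 1)) (fst h + int n * fst e, snd h + int n * snd e) =
    (\<Prod>i<n. coeffL U e * of_int (fst h + int i * fst e) + coeffL V e * of_int (snd h + int i * snd e))"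
proof (induction n)
  case (Suc n)
  have shift: "e + (fst h + int n * fst e, snd h + int n * snd e) =
      (fst h + int (Suc n) * fst e, snd h + int (Suc n) * snd e)"
    by (cases e) (simp add: algebra_simps)
  from euler_der_top[OF U V conjunct1[OF Suc.IH]] show ?case
    unfolding shift using conjunct2[OF Suc.IH] by simp
qed simp

section \<open>Roots of unity and Fourier inversion\<close>

definition zeta :: "nat \<Rightarrow> complex" where "zeta c = cis (2 * pi / real c)"

lemma zeta_pow_eq_1_iff:
  assumes "c \<ge> 1" shows "zeta c ^ m = 1 \<longleftrightarrow> c dvd m"
proof -
  have pow: "zeta c ^ m = cis (2 * pi * (real m / real c))"
    by (simp add: zeta_def DeMoivre field_simps)
  show ?thesis
  proof
    assume "zeta c ^ m = 1"
    then have "cos (2 * pi * (real m / real c)) = 1" unfolding pow by (metis cis.sel(1) one_complex.sel(1))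
    then obtain n :: int where "2 * pi * (real m / real c) = real_of_int n * 2 * pi"
      using cos_one_2pi_int by metis
    then have "real m = real_of_int n * real c" using assms by (simp add: field_simps)
    then have "int m = n * int c" by (metis of_int_eq_iff of_int_mult of_int_of_nat_eq)
    then show "c dvd m" by (metis dvd_triv_right int_dvd_int_iff)
  next
    assume "c dvd m"
    then obtain q where "m = c * q" by auto
    then have "zeta c ^ m = cis (2 * pi * real q)" using assms unfolding pow by simp
    then show "zeta c ^ m = 1" by simp
  qed
qed

lemma zeta_power_sum:
  assumes "c \<ge> 1" shows "(\<Sum>l<c. zeta c ^ (l * m)) = (if c dvd m then of_nat c else 0)"
proof (cases "c dvd m")
  case True
  then have "zeta c ^ (l * m) = 1" for l
    using zeta_pow_eq_1_iff[OF assms] by (simp add: power_mult[symmetric] mult.commute[of l])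
  then show ?thesis using True by simp
next
  case False
  let ?x = "zeta c ^ m"
  have "?x \<noteq> 1" using False zeta_pow_eq_1_iff[OF assms] by simp
  moreover have "?x ^ c = 1"
    using zeta_pow_eq_1_iff[OF assms] by (simp add: power_mult[symmetric] mult.commute[of m])
  ultimately have "(\<Sum>l<c. ?x ^ l) = 0" using geometric_sum[of ?x c] by simp
  then show ?thesis using False by (simp add: power_mult[symmetric] mult.commute[of _ m])
qed

lemma dvd_shift_iff:
  fixes c k r :: nat assumes "r < c" shows "c dvd (k + (c - r)) \<longleftrightarrow> k mod c = r"
proof -
  have "c dvd (k + (c - r)) \<longleftrightarrow> int c dvd (int k - int r) + int c"
    using assms by (simp add: algebra_simps flip: int_dvd_int_iff)
  also have "\<dots> \<longleftrightarrow> int k mod int c = int r mod int c"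
    by (simp add: mod_eq_dvd_iff)
  also have "\<dots> \<longleftrightarrow> k mod c = r"
    using assms by (simp flip: of_nat_mod)
  finally show ?thesis .
qed

lemma dft_residue_class:
  assumes c: "c \<ge> 1" and S: "finite S" and r: "r < c"
    and h: "\<forall>l<c. (\<Sum>k\<in>S. \<gamma> k * zeta c ^ (l * k)) = 0"
  shows "(\<Sum>k\<in>{k\<in>S. k mod c = r}. \<gamma> k) = 0"
proof -
  have "0 = (\<Sum>l<c. zeta c ^ (l * (c - r)) * (\<Sum>k\<in>S. \<gamma> k * zeta c ^ (l * k)))" using h by simp
  also have "\<dots> = (\<Sum>k\<in>S. \<gamma> k * (\<Sum>l<c. zeta c ^ (l * (k + (c - r)))))"
    by (simp add: sum_distrib_left sum_distrib_right algebra_simps power_add[symmetric] sum.swap[of _ S])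
  also have "\<dots> = (\<Sum>k\<in>S. \<gamma> k * (if k mod c = r then of_nat c else 0))"
    using zeta_power_sum[OF c] dvd_shift_iff[OF r] by simp
  also have "\<dots> = of_nat c * (\<Sum>k\<in>{k\<in>S. k mod c = r}. \<gamma> k)"
    using S by (simp add: sum.inter_filter[symmetric] sum_distrib_left mult.commute if_distrib cong: if_cong)
  finally show ?thesis using c by simp
qed

lemma dft_frequency_present:
  assumes c: "c \<ge> 1" and S: "finite S" and C: "C \<noteq> 0"
    and h: "\<forall>l<c. (\<Sum>k\<in>S. \<beta> k * zeta c ^ (l * k)) = C * zeta c ^ (l * m)"
  shows "\<exists>k\<in>S. \<beta> k \<noteq> 0 \<and> k mod c = m mod c"
proof (rule ccontr)
  assume none: "\<not> ?thesis"
  define S' where "S' = insert m S"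
  define \<gamma> where "\<gamma> k = (if k \<in> S then \<beta> k else 0) - (if k = m then C else 0)" for k
  have S': "finite S'" using S by (simp add: S'_def)
  have "(\<Sum>k\<in>S'. \<gamma> k * zeta c ^ (l * k)) = 0" if "l < c" for l
  proof -
    have "(\<Sum>k\<in>S'. (if k \<in> S then \<beta> k else 0) * zeta c ^ (l * k)) = (\<Sum>k\<in>S. \<beta> k * zeta c ^ (l * k))"
      using S by (intro sum.mono_neutral_cong_right) (auto simp: S'_def)
    moreover have "(\<Sum>k\<in>S'. (if k = m then C else 0) * zeta c ^ (l * k)) =
        (\<Sum>k\<in>S'. if k = m then C * zeta c ^ (l * m) else 0)"
      by (intro sum.cong) auto
    moreover have "\<dots> = C * zeta c ^ (l * m)"
      using S' by (simp add: S'_def)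
    ultimately show ?thesis
      using h that by (simp add: \<gamma>_def sum_subtractf left_diff_distrib)
  qed
  then have "(\<Sum>k\<in>{k\<in>S'. k mod c = m mod c}. \<gamma> k) = 0"
    using dft_residue_class[OF c S', of "m mod c"] c by simp
  moreover have "(\<Sum>k\<in>{k\<in>S'. k mod c = m mod c}. \<gamma> k) = (\<Sum>k\<in>{k\<in>S'. k mod c = m mod c}. - (if k = m then C else 0))"
    using none by (intro sum.cong) (auto simp: \<gamma>_def)
  moreover have "\<dots> = - C"
    using S' by (simp add: S'_def sum_negf if_distrib cong: if_cong)
  ultimately show False using C by simp
qed

section \<open>Arithmetic of top exponents\<close>

text \<open>The following lemmas concern the top coefficients u l, v l (at a common exponent (e1, e2))
  of the coefficients U, V of the Euler derivations attached to the c roots of unity zeta^l.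
  Local nilpotency yields the vanishing of linear forms in u l, v l, and the shapes of the
  images of D X, D Y, D Z yield Fourier expansions of u, v with constrained frequencies.\<close>

lemma sum_single_nonzero:
  assumes "finite S" "k0 \<in> S" "\<forall>k\<in>S. \<beta> k \<noteq> 0 \<longrightarrow> k = k0"
  shows "(\<Sum>k\<in>S. \<beta> k * (w k :: complex)) = \<beta> k0 * w k0"
proof -
  have "(\<Sum>k\<in>S - {k0}. \<beta> k * w k) = 0" using assms(3) by (intro sum.neutral) auto
  then show ?thesis using assms by (simp add: sum.remove)
qed

lemma nonzero_sum_coeff:
  "(\<Sum>k\<in>S. \<beta> k * (w k :: complex)) \<noteq> 0 \<Longrightarrow> \<exists>k\<in>S. \<beta> k \<noteq> 0"
  by (metis (mono_tags, lifting) mult_zero_left sum.neutral)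

lemma negative_step_bounds:
  fixes c i :: nat and e :: int
  assumes "c \<ge> 1" and "int c + int i * e = 0"
  shows "- int c \<le> e \<and> e \<le> -1"
proof -
  have "i \<ge> 1" using assms by (cases i) auto
  moreover have "e < 0"
  proof (rule ccontr)
    assume "\<not> e < 0"
    then have "int i * e \<ge> 0" by simp
    then show False using assms by linarith
  qed
  ultimately have "int i * e \<le> 1 * e" by (intro mult_right_mono_neg) auto
  then show ?thesis using assms \<open>e < 0\<close> by linarith
qed

lemma small_representation:
  fixes a c i k :: nat and x :: int
  assumes "x < int c" and "x = int c * int i + int a * int k"
  shows "i = 0 \<and> int a * int k = x"
proof -
  have "i = 0"
  proof (rule ccontr)
    assume "i \<noteq> 0"
    then have "c \<le> c * i" by simp
    then have "int c \<le> int c * int i" by (metis of_nat_le_iff of_nat_mult)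
    moreover have "int a * int k \<ge> 0" by simp
    ultimately show False using assms by linarith
  qed
  then show ?thesis using assms by simp
qed

text \<open>The final contradiction of the one-variable case: a frequency congruent to k0 + 1 but
  strictly smaller would need k0 + 1 \<ge> c, which a k0 < c rules out.\<close>
lemma shifted_frequency_impossible:
  fixes a c k0 k3 i1 :: nat and e :: int
  assumes a2: "a \<ge> 2" and c2: "c \<ge> 2" and e: "e \<le> -1"
    and ak0: "int a * int k0 = int c + e" and i1: "int a + e = int c * int i1 + int a * int k3"
    and k3: "k3 mod c = Suc k0 mod c"
  shows False
proof -
  have eq: "int a * int (Suc k0) - int a * int k3 = int c * (int i1 + 1)"
    using i1 ak0 by (simp add: algebra_simps)
  have "k3 < Suc k0"
  proof (rule ccontr)
    assume "\<not> k3 < Suc k0"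
    then have "int a * int (Suc k0) \<le> int a * int k3" by (intro mult_left_mono) auto
    moreover have "int c * (int i1 + 1) > 0" using c2 by simp
    ultimately show False using eq by linarith
  qed
  then have "c dvd (Suc k0 - k3)" using k3 mod_eq_dvd_iff_nat[of k3 "Suc k0" c] by simp
  then have "c \<le> Suc k0 - k3" using \<open>k3 < Suc k0\<close> by (simp add: dvd_imp_le)
  moreover have "int a * int k0 \<ge> 2 * int k0" using a2 by (intro mult_right_mono) auto
  ultimately show False using ak0 e c2 by linarith
qed

text \<open>If only one of the two Euler components has a nonzero top coefficient, the constraints
  coming from that variable and from Z are contradictory.\<close>
lemma one_component_case_impossible:
  fixes a c :: nat and e :: int and u \<beta> \<beta>Z :: "nat \<Rightarrow> complex"
  assumes a2: "a \<ge> 2" and c2: "c \<ge> 2" and l0: "l0 < c" "u l0 \<noteq> 0"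
    and nil: "\<exists>i::nat. u l0 * of_int (int c + int i * e) = 0"
    and S: "finite S" and exp: "\<forall>l<c. of_nat c * u l = (\<Sum>k\<in>S. \<beta> k * zeta c ^ (l * k))"
    and supp: "\<forall>k\<in>S. \<beta> k \<noteq> 0 \<longrightarrow> (\<exists>i::nat. int c + e = int c * int i + int a * int k)"
    and SZ: "finite SZ" and expZ: "\<forall>l<c. zeta c ^ l * (of_nat a * u l) = (\<Sum>k\<in>SZ. \<beta>Z k * zeta c ^ (l * k))"
    and suppZ: "\<forall>k\<in>SZ. \<beta>Z k \<noteq> 0 \<longrightarrow> (\<exists>i::nat. int a + e = int c * int i + int a * int k)"
  shows False
proof -
  obtain i where "u l0 * of_int (int c + int i * e) = 0" using nil by blast
  then have "(of_int (int c + int i * e) :: complex) = 0" using l0(2) by (meson mult_eq_0_iff)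
  then have "int c + int i * e = 0" by (simp only: of_int_eq_0_iff)
  moreover have "1 \<le> c" using c2 by simp
  ultimately have e: "- int c \<le> e" "e \<le> -1" using negative_step_bounds by blast+
  have exp_rep: "int a * int k = int c + e" if "k \<in> S" "\<beta> k \<noteq> 0" for k
    using supp that small_representation[of "int c + e" c _ a k] e by auto
  obtain k0 where k0: "k0 \<in> S" "\<beta> k0 \<noteq> 0"
    using nonzero_sum_coeff exp[rule_format, OF l0(1)] l0(2) c2 by fastforce
  have only_k0: "\<forall>k\<in>S. \<beta> k \<noteq> 0 \<longrightarrow> k = k0"
    using exp_rep k0 a2 by (metis mult_cancel_left of_nat_eq_iff not_numeral_le_zero of_nat_0)
  define C where "C = of_nat a * \<beta> k0 / of_nat c"
  have "(\<Sum>k\<in>SZ. \<beta>Z k * zeta c ^ (l * k)) = C * zeta c ^ (l * Suc k0)" if "l < c" for l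
  proof -
    have cu: "of_nat c * u l = \<beta> k0 * zeta c ^ (l * k0)"
      using exp that sum_single_nonzero[OF S k0(1) only_k0] by simp
    have "(\<Sum>k\<in>SZ. \<beta>Z k * zeta c ^ (l * k)) = of_nat a * (of_nat c * u l) / of_nat c * zeta c ^ l"
      using expZ[rule_format, OF that] c2 by (simp add: mult_ac)
    also have "\<dots> = C * zeta c ^ (l * Suc k0)"
      unfolding cu C_def by (simp add: power_add)
    finally show ?thesis .
  qed
  moreover have "C \<noteq> 0" using a2 c2 k0 by (simp add: C_def)
  ultimately obtain k3 where k3: "k3 \<in> SZ" "\<beta>Z k3 \<noteq> 0" "k3 mod c = Suc k0 mod c"
    using dft_frequency_present[OF _ SZ] c2 by (metis One_nat_def Suc_leD numeral_2_eq_2)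
  obtain i1 where "int a + e = int c * int i1 + int a * int k3" using suppZ k3 by blast
  then show False
    using shifted_frequency_impossible[OF a2 c2 e(2) exp_rep[OF k0] _ k3(3)] by blast
qed

text \<open>If both top coefficients are nonzero somewhere, both exponents are nonnegative and the two
  linear relations force u = v = 0 at every root of unity.\<close>
lemma linear_relations_force_zero:
  fixes e1 e2 :: int and u v :: complex and c i j :: nat
  assumes c: "c \<ge> 1" and e1: "e1 \<ge> 0" and e2: "e2 \<ge> 0"
    and rX: "u * of_int (int c + int i * e1) + v * of_int (int i * e2) = 0"
    and rY: "u * of_int (int j * e1) + v * of_int (int c + int j * e2) = 0"
  shows "u = 0"
proof -
  define L where "L = u * of_int e1 + v * of_int e2"
  have cu: "of_nat c * u = - (of_nat i * L)" using rX by (simp add: L_def algebra_simps add_eq_0_iff)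
  have cv: "of_nat c * v = - (of_nat j * L)" using rY by (simp add: L_def algebra_simps add_eq_0_iff)
  have "of_nat c * L = (of_nat c * u) * of_int e1 + (of_nat c * v) * of_int e2"
    by (simp add: L_def algebra_simps)
  also have "\<dots> = - (L * (of_nat i * of_int e1 + of_nat j * of_int e2))"
    unfolding cu cv by (simp add: algebra_simps)
  finally have cL: "of_nat c * L = - (L * (of_nat i * of_int e1 + of_nat j * of_int e2))" .
  have "L * of_int (int c + int i * e1 + int j * e2) =
      of_nat c * L + L * (of_nat i * of_int e1 + of_nat j * of_int e2)"
    by (simp add: algebra_simps)
  then have "L * of_int (int c + int i * e1 + int j * e2) = 0" using cL by simp
  moreover have "int c + int i * e1 + int j * e2 > 0" using c e1 e2 by (simp add: add_pos_nonneg)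
  ultimately have "L = 0" by (metis mult_eq_0_iff of_int_eq_0_iff less_irrefl)
  then show "u = 0" using cu c by simp
qed

text \<open>Hypotheses: the nilpotency relations for s^c and t^c (relX, relY), and the Fourier expansions
  of c u, c v and zeta^l (a u + b v) coming from D X, D Y, D Z, with their frequency constraints.\<close>
lemma top_coefficients_vanish:
  fixes a b c :: nat and e1 e2 :: int and u v \<beta>X \<beta>Y \<beta>Z :: "nat \<Rightarrow> complex"
  assumes a2: "a \<ge> 2" and b2: "b \<ge> 2" and c2: "c \<ge> 2"
    and relX: "\<forall>l<c. \<exists>i::nat. u l * of_int (int c + int i * e1) + v l * of_int (int i * e2) = 0"
    and relY: "\<forall>l<c. \<exists>j::nat. u l * of_int (int j * e1) + v l * of_int (int c + int j * e2) = 0"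
    and SX: "finite SX" and expX: "\<forall>l<c. of_nat c * u l = (\<Sum>k\<in>SX. \<beta>X k * zeta c ^ (l * k))"
    and suppX: "\<forall>k\<in>SX. \<beta>X k \<noteq> 0 \<longrightarrow> (\<exists>i j::nat. int c + e1 = int c * int i + int a * int k \<and> e2 = int c * int j + int b * int k)"
    and SY: "finite SY" and expY: "\<forall>l<c. of_nat c * v l = (\<Sum>k\<in>SY. \<beta>Y k * zeta c ^ (l * k))"
    and suppY: "\<forall>k\<in>SY. \<beta>Y k \<noteq> 0 \<longrightarrow> (\<exists>i j::nat. e1 = int c * int i + int a * int k \<and> int c + e2 = int c * int j + int b * int k)"
    and SZ: "finite SZ" and expZ: "\<forall>l<c. zeta c ^ l * (of_nat a * u l + of_nat b * v l) = (\<Sum>k\<in>SZ. \<beta>Z k * zeta c ^ (l * k))"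
    and suppZ: "\<forall>k\<in>SZ. \<beta>Z k \<noteq> 0 \<longrightarrow> (\<exists>i j::nat. int a + e1 = int c * int i + int a * int k \<and> int b + e2 = int c * int j + int b * int k)"
  shows "\<forall>l<c. u l = 0 \<and> v l = 0"
proof (rule ccontr)
  assume "\<not> ?thesis"
  then consider (both) l1 l2 where "l1 < c" "u l1 \<noteq> 0" "l2 < c" "v l2 \<noteq> 0"
    | (only_u) l1 where "l1 < c" "u l1 \<noteq> 0" "\<forall>l<c. v l = 0"
    | (only_v) l1 where "l1 < c" "v l1 \<noteq> 0" "\<forall>l<c. u l = 0"
    by blast
  then show False
  proof cases
    case both
    obtain k1 where "k1 \<in> SX" "\<beta>X k1 \<noteq> 0"
      using nonzero_sum_coeff expX[rule_format, OF both(1)] both(2) c2 by fastforce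
    then have e2: "e2 \<ge> 0" using suppX by fastforce
    obtain k2 where "k2 \<in> SY" "\<beta>Y k2 \<noteq> 0"
      using nonzero_sum_coeff expY[rule_format, OF both(3)] both(4) c2 by fastforce
    then have e1: "e1 \<ge> 0" using suppY by fastforce
    obtain i j where rX: "u l1 * of_int (int c + int i * e1) + v l1 * of_int (int i * e2) = 0"
      and rY: "u l1 * of_int (int j * e1) + v l1 * of_int (int c + int j * e2) = 0"
      using relX relY both(1) by blast
    have "u l1 = 0" using linear_relations_force_zero[OF _ e1 e2 rX rY] c2 by simp
    then show False using both(2) by simp
  next
    case only_u
    show False
    proof (rule one_component_case_impossible[where u = u and e = e1 and S = SX and \<beta> = \<beta>X
          and SZ = SZ and \<beta>Z = \<beta>Z, OF a2 c2 only_u(1,2)])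
      show "\<exists>i::nat. u l1 * of_int (int c + int i * e1) = 0" using relX only_u by fastforce
    qed (use SX expX suppX SZ expZ suppZ only_u(3) in auto)
  next
    case only_v
    show False
    proof (rule one_component_case_impossible[where u = v and e = e2 and S = SY and \<beta> = \<beta>Y
          and SZ = SZ and \<beta>Z = \<beta>Z, OF b2 c2 only_v(1,2)])
      show "\<exists>i::nat. v l1 * of_int (int c + int i * e2) = 0" using relY only_v by fastforce
    qed (use SY expY suppY SZ expZ suppZ only_v(3) in auto)
  qed
qed

section \<open>The specialisations psi z of C[X,Y,Z]\<close>

locale trinomial =
  fixes a b c :: nat
  assumes a2: "a \<ge> 2" and b2: "b \<ge> 2" and c2: "c \<ge> 2"
begin

definition trinom :: cpoly3 where "trinom = varX ^ a * varY ^ b - varZ ^ c"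

text \<open>psi z is built in three layers: phi1 substitutes X := s^c in C[X], phi2 substitutes
  Y := t^c in C[X][Y], and psi z substitutes Z := z s^a t^b in C[X,Y][Z].\<close>
definition phi1 :: "complex poly \<Rightarrow> laurent" where
  "phi1 r = poly (map_poly (\<lambda>\<alpha>. monoL 0 \<alpha>) r) (monoL (int c, 0) 1)"
definition phi2 :: "complex poly poly \<Rightarrow> laurent" where
  "phi2 q = poly (map_poly phi1 q) (monoL (0, int c) 1)"
definition psi :: "complex \<Rightarrow> cpoly3 \<Rightarrow> laurent" where
  "psi z h = poly (map_poly phi2 h) (monoL (int a, int b) z)"

abbreviation "sX \<equiv> monoL (int c, 0) 1"
abbreviation "sY \<equiv> monoL (0, int c) 1"
abbreviation "sZ z \<equiv> monoL (int a, int b) z"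

lemma hom_phi1: "is_hom phi1"
proof -
  have "is_hom (\<lambda>\<alpha>::complex. monoL 0 \<alpha>)"
    unfolding is_hom_def by (simp add: Poly_Mapping.single_add Poly_Mapping.mult_single)
  then show ?thesis unfolding phi1_def[abs_def] by (rule is_hom_eval_map_poly)
qed

lemma hom_phi2: "is_hom phi2"
  unfolding phi2_def[abs_def] using is_hom_eval_map_poly[OF hom_phi1] .

lemma hom_psi: "is_hom (psi z)"
  unfolding psi_def[abs_def] using is_hom_eval_map_poly[OF hom_phi2] .

lemma phi1_pCons: "phi1 (pCons \<alpha> r) = monoL 0 \<alpha> + sX * phi1 r"
  unfolding phi1_def by (simp add: map_poly_pCons)

lemma phi2_pCons: "phi2 (pCons r q) = phi1 r + sY * phi2 q"
  unfolding phi2_def by (simp add: map_poly_pCons is_hom_0[OF hom_phi1])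

lemma coeffL_phi1_off: "(\<forall>i. k \<noteq> (int (c*i), 0)) \<Longrightarrow> coeffL (phi1 r) k = 0"
proof (induction r arbitrary: k)
  case 0 then show ?case by (simp add: is_hom_0[OF hom_phi1])
next
  case (pCons \<alpha> r)
  have "k \<noteq> 0" using pCons(3)[rule_format, of 0] by (simp add: zero_prod_def)
  moreover have "\<forall>i. k - (int c, 0) \<noteq> (int (c*i), 0)"
  proof
    fix i show "k - (int c, 0) \<noteq> (int (c*i), 0)"
      using pCons(3)[rule_format, of "Suc i"] by (cases k) (auto simp: algebra_simps)
  qed
  ultimately show ?case using pCons(2)
    by (simp add: phi1_pCons Poly_Mapping.lookup_add coeffL_mono_mult Poly_Mapping.lookup_single when_def)
qed

lemma coeffL_phi1: "coeffL (phi1 r) (int c * int i, 0) = coeff r i"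
proof (induction r arbitrary: i)
  case 0 then show ?case by (simp add: is_hom_0[OF hom_phi1])
next
  case (pCons \<alpha> r)
  show ?case
  proof (cases i)
    case 0
    have "coeffL (phi1 r) (- int c, 0) = 0"
    proof (intro coeffL_phi1_off allI)
      fix i have "int c * int i \<ge> 0" by simp
      then show "(- int c, 0) \<noteq> (int (c * i), 0)" using c2 by (clarsimp; linarith)
    qed
    then show ?thesis using 0
      by (simp add: phi1_pCons Poly_Mapping.lookup_add coeffL_mono_mult zero_prod_def[symmetric])
  next
    case (Suc j)
    have e: "int c * (1 + int j) - int c = int c * int j" by (simp add: algebra_simps)
    have "(int c * int i, 0::int) \<noteq> 0" using Suc c2 by (simp add: zero_prod_def)
    then show ?thesis using Suc pCons(2)
      by (simp add: phi1_pCons Poly_Mapping.lookup_add coeffL_mono_mult e Poly_Mapping.lookup_single when_def)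
  qed
qed

lemma coeffL_phi2_off: "(\<forall>i j. k \<noteq> (int (c*i), int (c*j))) \<Longrightarrow> coeffL (phi2 q) k = 0"
proof (induction q arbitrary: k)
  case 0 then show ?case by (simp add: is_hom_0[OF hom_phi2])
next
  case (pCons r q)
  have "coeffL (phi1 r) k = 0"
    using pCons(3) by (intro coeffL_phi1_off) (metis mult_0_right of_nat_0)
  moreover have "\<forall>i j. k - (0, int c) \<noteq> (int (c*i), int (c*j))"
  proof (intro allI)
    fix i j show "k - (0, int c) \<noteq> (int (c*i), int (c*j))"
      using pCons(3)[rule_format, of i "Suc j"] by (cases k) (auto simp: algebra_simps)
  qed
  ultimately show ?case using pCons(2)
    by (simp add: phi2_pCons Poly_Mapping.lookup_add coeffL_mono_mult)
qed

lemma coeffL_phi2: "coeffL (phi2 q) (int c * int i, int c * int j) = coeff (coeff q j) i"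
proof (induction q arbitrary: j)
  case 0 then show ?case by (simp add: is_hom_0[OF hom_phi2])
next
  case (pCons r q)
  show ?case
  proof (cases j)
    case 0
    have "coeffL (phi2 q) (int (c*i), - int c) = 0"
    proof (intro coeffL_phi2_off allI)
      fix i' j' have "int c * int j' \<ge> 0" by simp
      then show "(int (c*i), - int c) \<noteq> (int (c * i'), int (c*j'))" using c2 by (clarsimp; linarith)
    qed
    then show ?thesis using 0
      by (simp add: phi2_pCons Poly_Mapping.lookup_add coeffL_mono_mult coeffL_phi1)
  next
    case (Suc j')
    have e: "int c * (1 + int j') - int c = int c * int j'" by (simp add: algebra_simps)
    have "coeffL (phi1 r) (int c * int i, int c * int j) = 0"
    proof (intro coeffL_phi1_off allI)
      fix i' have "int c * int j > 0" using Suc c2 by simp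
      then show "(int c * int i, int c * int j) \<noteq> (int (c * i'), 0)" by auto
    qed
    then show ?thesis using Suc pCons(2)
      by (simp add: phi2_pCons Poly_Mapping.lookup_add coeffL_mono_mult e)
  qed
qed

lemma phi2_eq_0_iff: "phi2 q = 0 \<longleftrightarrow> q = 0"
proof
  assume "phi2 q = 0"
  then have "coeff (coeff q j) i = 0" for i j using coeffL_phi2[of q i j] by simp
  then show "q = 0" by (intro poly_eqI) (simp add: poly_eq_iff)
qed (simp add: is_hom_0[OF hom_phi2])

text \<open>The coefficient of psi z h at the exponent m, as an exponential sum in z: the k-th term
  comes from the Z^k-part of h, shifted by the exponent (k a, k b) of (s^a t^b)^k.\<close>
definition psi_coeff :: "cpoly3 \<Rightarrow> int \<times> int \<Rightarrow> nat \<Rightarrow> complex" where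
  "psi_coeff h m k = coeffL (phi2 (coeff h k)) (m - (int (k * a), int (k * b)))"

lemma coeffL_psi: "coeffL (psi z h) m = (\<Sum>k\<le>degree h. psi_coeff h m k * z ^ k)"
proof -
  have "psi z h = (\<Sum>k\<le>degree (map_poly phi2 h). coeff (map_poly phi2 h) k * sZ z ^ k)"
    unfolding psi_def poly_altdef ..
  also have "\<dots> = (\<Sum>k\<le>degree h. coeff (map_poly phi2 h) k * sZ z ^ k)"
    by (rule sum.mono_neutral_left) (auto simp: map_poly_degree_leq coeff_eq_0)
  also have "\<dots> = (\<Sum>k\<le>degree h. phi2 (coeff h k) * monoL (int (k*a), int (k*b)) (z ^ k))"
    by (simp add: coeff_map_poly is_hom_0[OF hom_phi2] mono_power)
  finally show ?thesis
    by (simp add: Poly_Mapping.lookup_sum coeffL_mult_mono psi_coeff_def mult.commute)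
qed

lemma coeffL_psi_root: "coeffL (psi (zeta c ^ l) h) m = (\<Sum>k\<le>degree h. psi_coeff h m k * zeta c ^ (l * k))"
  unfolding coeffL_psi by (simp add: power_mult[symmetric] mult.commute)

lemma psi_coeff_support:
  assumes "psi_coeff h m k \<noteq> 0"
  shows "\<exists>i j::nat. fst m = int c * int i + int a * int k \<and> snd m = int c * int j + int b * int k"
proof -
  obtain i j :: nat where "fst m - int (k * a) = int c * int i" "snd m - int (k * b) = int c * int j"
    using coeffL_phi2_off[of "m - (int (k * a), int (k * b))"] assms
    by (cases m) (fastforce simp: psi_coeff_def)
  then show ?thesis by (intro exI[of _ i] exI[of _ j]) (simp add: algebra_simps)
qed

lemma psi_const: "psi z (const3 \<alpha>) = monoL 0 \<alpha>"
  and psi_X: "psi z varX = sX"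
  and psi_Y: "psi z varY = sY"
  and psi_Z: "psi z varZ = sZ z"
  by (simp_all add: psi_def const3_def varX_def varY_def varZ_def map_poly_pCons phi2_pCons phi1_pCons
      is_hom_0[OF hom_phi1] is_hom_0[OF hom_phi2] is_hom_1[OF hom_phi1] is_hom_1[OF hom_phi2])

lemma psi_trinom: assumes "z ^ c = 1" shows "psi z trinom = 0"
proof -
  have "psi z trinom = sX ^ a * sY ^ b - sZ z ^ c"
    unfolding trinom_def
    by (simp add: is_hom_diff[OF hom_psi] is_hom_mult[OF hom_psi] is_hom_power[OF hom_psi] psi_X psi_Y psi_Z)
  also have "\<dots> = 0" using assms by (simp add: mono_power Poly_Mapping.mult_single algebra_simps)
  finally show ?thesis .
qed

lemma psi_dvd: assumes "z ^ c = 1" "trinom dvd h" shows "psi z h = 0"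
  using assms psi_trinom[OF assms(1)] by (auto simp: is_hom_mult[OF hom_psi] dvd_def)

lemma zeta_root: "(zeta c ^ l) ^ c = 1"
  using zeta_pow_eq_1_iff[of c "l * c"] c2 by (simp add: power_mult[symmetric])

text \<open>Division with remainder by the trinomial, viewed as monic of degree c in Z.\<close>
lemma reduce_Z_degree: "\<exists>h'. trinom dvd (h - h') \<and> degree h' < c"
proof (induction "degree h" arbitrary: h rule: less_induct)
  case less
  show ?case
  proof (cases "degree h < c")
    case True
    then show ?thesis by (intro exI[of _ h]) simp
  next
    case False
    have coeff_trinom: "coeff trinom n = - (if n = c then 1 else 0)" if "n \<ge> 1" for n
    proof -
      have "degree (varX ^ a * varY ^ b) = 0"
        using degree_mult_le[of "varX ^ a" "varY ^ b"] degree_power_le[of varX a] degree_power_le[of varY b]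
        by (simp add: varX_def varY_def)
      then have "coeff (varX ^ a * varY ^ b) n = 0" using that by (intro coeff_eq_0) simp
      moreover have "varZ ^ c = monom 1 c" by (simp add: varZ_def monom_altdef)
      ultimately show ?thesis by (simp add: trinom_def)
    qed
    define d where "d = degree h - c"
    define h1 where "h1 = h + monom (lead_coeff h) d * trinom"
    have "degree h1 \<le> degree h - 1"
    proof (rule degree_le, intro allI impI)
      fix i assume i: "degree h - 1 < i"
      then have "coeff h1 i = coeff h i - lead_coeff h * (if i - d = c then 1 else 0)"
        using False c2 by (simp add: h1_def d_def coeff_monom_mult coeff_trinom)
      then show "coeff h1 i = 0"
        using i False by (cases "i = degree h") (auto simp: d_def coeff_eq_0)
    qed
    then have "degree h1 < degree h" using False c2 by linarith
    then obtain h' where "trinom dvd (h1 - h')" "degree h' < c" using less by blast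
    moreover have "h - h' = (h1 - h') - monom (lead_coeff h) d * trinom" by (simp add: h1_def)
    ultimately show ?thesis by (metis dvd_diff dvd_triv_right)
  qed
qed

text \<open>On polynomials of Z-degree below c the c specialisations are jointly injective: Fourier
  inversion separates the Z-degrees, which are distinct modulo c, and phi2 is injective.\<close>
lemma psi_roots_injective_low_degree:
  assumes deg: "degree h < c" and vanish: "\<forall>l<c. psi (zeta c ^ l) h = 0"
  shows "h = 0"
proof -
  have "coeffL (phi2 (coeff h k0)) x = 0" if k0: "k0 \<le> degree h" for k0 x
  proof -
    define m where "m = x + (int (k0 * a), int (k0 * b))"
    have "\<forall>l<c. (\<Sum>k\<in>{..degree h}. psi_coeff h m k * zeta c ^ (l * k)) = 0"
      using vanish by (simp flip: coeffL_psi_root)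
    from dft_residue_class[OF _ _ _ this, of k0] c2 k0 deg
    have "(\<Sum>k\<in>{k\<in>{..degree h}. k mod c = k0}. psi_coeff h m k) = 0" by simp
    moreover have "{k\<in>{..degree h}. k mod c = k0} = {k0}" using k0 deg by auto
    ultimately show ?thesis by (simp add: psi_coeff_def m_def)
  qed
  then have "phi2 (coeff h (degree h)) = 0" by (intro Poly_Mapping.poly_mapping_eqI) simp
  then show "h = 0" by (simp add: phi2_eq_0_iff)
qed

lemma trinom_dvd_if_psi_roots: assumes "\<forall>l<c. psi (zeta c ^ l) h = 0" shows "trinom dvd h"
proof -
  obtain h' where h': "trinom dvd (h - h')" "degree h' < c" using reduce_Z_degree by blast
  have "psi (zeta c ^ l) h' = 0" if "l < c" for l
    using psi_dvd[OF zeta_root h'(1)] assms that by (simp add: is_hom_diff[OF hom_psi])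
  then have "h' = 0" using psi_roots_injective_low_degree[OF h'(2)] by blast
  then show ?thesis using h'(1) by simp
qed

end

section \<open>Locally nilpotent derivations seen through psi z\<close>

locale quotient_lnd = trinomial +
  fixes D :: "cpoly3 \<Rightarrow> cpoly3"
  assumes lnd: "quot_LND trinom D"
begin

definition Q :: "complex \<Rightarrow> cpoly3 \<Rightarrow> laurent" where "Q z g = psi z (D g)"

context
  fixes z :: complex assumes z: "z ^ c = 1"
begin

text \<open>The derivation axioms of D, read modulo the trinomial, survive psi z.\<close>
lemma Q_add: "Q z (g + h) = Q z g + Q z h"
  using lnd psi_dvd[OF z, of "D (g + h) - (D g + D h)"]
  by (simp add: quot_LND_def quot_derivation_def Q_def is_hom_diff[OF hom_psi] is_hom_add[OF hom_psi])

lemma Q_mult: "Q z (g * h) = psi z g * Q z h + psi z h * Q z g"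
  using lnd psi_dvd[OF z, of "D (g * h) - (g * D h + h * D g)"]
  by (simp add: quot_LND_def quot_derivation_def Q_def is_hom_diff[OF hom_psi] is_hom_add[OF hom_psi]
      is_hom_mult[OF hom_psi])

lemma Q_trinom: "Q z trinom = 0"
proof -
  have "trinom dvd (D trinom - D 0)"
    using lnd by (simp add: quot_LND_def quot_derivation_def)
  then have "psi z (D trinom - D 0) = 0" by (rule psi_dvd[OF z])
  then have "Q z trinom = Q z 0" by (simp add: Q_def is_hom_diff[OF hom_psi])
  also have "Q z 0 = 0" using Q_add[of 0 0] by simp
  finally show ?thesis .
qed

lemma Q_const: "Q z (const3 \<alpha>) = 0"
proof -
  have "trinom dvd (D (const3 \<alpha> * 1) - const3 \<alpha> * D 1)"
    using lnd by (simp only: quot_LND_def quot_derivation_def)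
  then have "psi z (D (const3 \<alpha> * 1) - const3 \<alpha> * D 1) = 0" by (rule psi_dvd[OF z])
  moreover have "Q z 1 = 0" using Q_mult[of 1 1] by (simp add: is_hom_1[OF hom_psi])
  ultimately show ?thesis by (simp add: Q_def is_hom_diff[OF hom_psi] is_hom_mult[OF hom_psi])
qed

lemma Q_diff: "Q z (g - h) = Q z g - Q z h"
  using Q_add[of "g - h" h] by simp

lemma Q_power: "n \<ge> 1 \<Longrightarrow> Q z (g ^ n) = of_nat n * psi z g ^ (n - 1) * Q z g"
proof (induction n)
  case (Suc n)
  show ?case
  proof (cases "n = 0")
    case False
    then have "Q z (g ^ Suc n) = psi z g * (of_nat n * psi z g ^ (n - 1) * Q z g) + psi z g ^ n * Q z g"
      using Suc.IH by (simp add: Q_mult is_hom_power[OF hom_psi])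
    also have "\<dots> = of_nat (Suc n) * psi z g ^ n * Q z g"
      using False by (simp add: algebra_simps power_eq_if)
    finally show ?thesis by simp
  qed simp
qed simp

lemma QZ_relation:
  "of_nat c * sZ z ^ (c - 1) * Q z varZ =
     of_nat b * sX ^ a * sY ^ (b - 1) * Q z varY + of_nat a * sX ^ (a - 1) * sY ^ b * Q z varX"
proof -
  have "0 = Q z (varX ^ a * varY ^ b) - Q z (varZ ^ c)"
    using Q_trinom by (simp add: trinom_def Q_diff)
  also have "\<dots> = of_nat b * sX ^ a * sY ^ (b - 1) * Q z varY + of_nat a * sX ^ (a - 1) * sY ^ b * Q z varX
      - of_nat c * sZ z ^ (c - 1) * Q z varZ"
    using a2 b2 c2 by (simp add: Q_mult Q_power is_hom_power[OF hom_psi] psi_X psi_Y psi_Z algebra_simps)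
  finally show ?thesis by simp
qed

end

text \<open>The coefficients of the derivation of L extending Q z: Q z X = c s^c U and
  Q z Y = c t^c V.\<close>
definition U :: "complex \<Rightarrow> laurent" where "U z = Q z varX * monoL (- int c, 0) (1 / of_nat c)"
definition V :: "complex \<Rightarrow> laurent" where "V z = Q z varY * monoL (0, - int c) (1 / of_nat c)"

definition delta :: "complex \<Rightarrow> laurent \<Rightarrow> laurent" where "delta z = euler_der (U z) (V z)"

context
  fixes z :: complex assumes z: "z ^ c = 1"
begin

text \<open>The monomial M = z s^(a - a c) t^(b - b c) / c inverts c (z s^a t^b)^(c-1) and converts the
  two monomials in the Z-relation into the factors of U and V.\<close>
lemma QZ_inverse_identities:
  assumes ab: "a = Suc a1" "b = Suc b1" "c = Suc c1"
  defines "M \<equiv> sZ z * monoL (- (int a * int c), - (int b * int c)) (1 / of_nat c)"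
  shows "of_nat c * sZ z ^ c1 * M = 1"
    and "sX ^ a * sY ^ b1 * M = sZ z * monoL (0, - int c) (1 / of_nat c)"
    and "sX ^ a1 * sY ^ b * M = sZ z * monoL (- int c, 0) (1 / of_nat c)"
proof -
  have "z ^ c1 * z = 1" using z ab by (simp add: mult.commute)
  then have unit: "of_nat c * z ^ c1 * z * (1 / of_nat c) = (1::complex)" using c2 by (simp add: field_simps)
  have "of_nat c * sZ z ^ c1 * M = monoL (int c1 * int a + int a - int a * int c, int c1 * int b + int b - int b * int c)
      (of_nat c * z ^ c1 * z * (1 / of_nat c))"
    unfolding M_def of_nat_single
    by (simp add: mono_power Poly_Mapping.mult_single algebra_simps del: Poly_Mapping.single_of_nat)
  also have "\<dots> = 1"
    unfolding unit using ab(3) by (simp add: algebra_simps zero_prod_def[symmetric])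
  finally show "of_nat c * sZ z ^ c1 * M = 1" .
  have "sX ^ a * sY ^ b1 * M = monoL (int a * int c + int a - int a * int c, int b1 * int c + int b - int b * int c)
      (z * (1 / of_nat c))"
    unfolding M_def by (simp add: mono_power Poly_Mapping.mult_single algebra_simps)
  then show "sX ^ a * sY ^ b1 * M = sZ z * monoL (0, - int c) (1 / of_nat c)"
    using ab(2) by (simp add: Poly_Mapping.mult_single algebra_simps)
  have "sX ^ a1 * sY ^ b * M = monoL (int a1 * int c + int a - int a * int c, int b * int c + int b - int b * int c)
      (z * (1 / of_nat c))"
    unfolding M_def by (simp add: mono_power Poly_Mapping.mult_single algebra_simps)
  then show "sX ^ a1 * sY ^ b * M = sZ z * monoL (- int c, 0) (1 / of_nat c)"
    using ab(1) by (simp add: Poly_Mapping.mult_single algebra_simps)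
qed

text \<open>Solving the Z-relation: Q z Z is what the Euler derivation assigns to z s^a t^b.\<close>
lemma QZ_eq: "Q z varZ = sZ z * (of_nat a * U z + of_nat b * V z)"
proof -
  obtain a1 b1 c1 where ab: "a = Suc a1" "b = Suc b1" "c = Suc c1"
    using a2 b2 c2 by (metis Suc_le_D numeral_2_eq_2)
  define M where "M = sZ z * monoL (- (int a * int c), - (int b * int c)) (1 / of_nat c)"
  note ids = QZ_inverse_identities[OF ab, folded M_def]
  have "Q z varZ = (of_nat c * sZ z ^ c1 * M) * Q z varZ" using ids(1) by simp
  also have "\<dots> = M * (of_nat c * sZ z ^ c1 * Q z varZ)" by (simp add: algebra_simps)
  also have "\<dots> = of_nat b * (sX ^ a * sY ^ b1 * M) * Q z varY + of_nat a * (sX ^ a1 * sY ^ b * M) * Q z varX"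
    using QZ_relation[OF z] ab by (simp add: algebra_simps)
  also have "\<dots> = sZ z * (of_nat a * U z + of_nat b * V z)"
    unfolding ids(2,3) U_def V_def by (simp add: algebra_simps)
  finally show ?thesis .
qed

lemma delta_X: "delta z sX = Q z varX"
proof -
  have "monoL (- int c, 0) (1 / of_nat c) * monoL (int c, 0) (of_nat c) = 1"
    using c2 by (simp add: Poly_Mapping.mult_single zero_prod_def[symmetric])
  then show ?thesis by (simp add: delta_def euler_der_mono U_def mult.assoc)
qed

lemma delta_Y: "delta z sY = Q z varY"
proof -
  have "monoL (0, - int c) (1 / of_nat c) * monoL (0, int c) (of_nat c) = 1"
    using c2 by (simp add: Poly_Mapping.mult_single zero_prod_def[symmetric])
  then show ?thesis by (simp add: delta_def euler_der_mono V_def mult.assoc)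
qed

lemma delta_Z: "delta z (sZ z) = Q z varZ"
proof -
  have "monoL (int a, int b) (of_nat a * z) = of_nat a * sZ z"
    "monoL (int a, int b) (of_nat b * z) = of_nat b * sZ z"
    unfolding of_nat_single by (simp_all add: Poly_Mapping.mult_single del: Poly_Mapping.single_of_nat)
  then show ?thesis unfolding QZ_eq by (simp add: delta_def euler_der_mono algebra_simps)
qed

text \<open>Q z = delta z \<circ> psi z: both are derivations along psi z agreeing on constants and on
  the generators X, Y, Z.\<close>
lemma Q_eq_delta: "Q z g = delta z (psi z g)"
proof (induction g rule: cpoly3_induct)
  case (1 \<alpha>) then show ?case by (simp add: Q_const[OF z] psi_const delta_def euler_der_mono)
next
  case (2 g h) then show ?case by (simp add: Q_add[OF z] is_hom_add[OF hom_psi] delta_def euler_der_add)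
next
  case (3 g) then show ?case
    by (simp add: Q_mult[OF z] is_hom_mult[OF hom_psi] delta_def euler_der_mult psi_X delta_X[unfolded delta_def] algebra_simps)
next
  case (4 g) then show ?case
    by (simp add: Q_mult[OF z] is_hom_mult[OF hom_psi] delta_def euler_der_mult psi_Y delta_Y[unfolded delta_def] algebra_simps)
next
  case (5 g) then show ?case
    by (simp add: Q_mult[OF z] is_hom_mult[OF hom_psi] delta_def euler_der_mult psi_Z delta_Z[unfolded delta_def] algebra_simps)
qed

lemma psi_D_iterate: "psi z ((D ^^ n) g) = (delta z ^^ n) (psi z g)"
  by (induction n) (simp_all add: Q_eq_delta[unfolded Q_def])

text \<open>Local nilpotency of D on a generator mapped to a monomial s^h: the top coefficient of
  delta^n(s^h) vanishes, so one factor of the product in euler_der_iterate_top is zero.\<close>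
lemma nilpotency_relation:
  assumes U: "exps_le (U z) e" and V: "exps_le (V z) e" and g: "psi z g = monoL h 1"
  shows "\<exists>i::nat. coeffL (U z) e * of_int (fst h + int i * fst e) + coeffL (V z) e * of_int (snd h + int i * snd e) = 0"
proof -
  obtain n where "trinom dvd (D ^^ n) g" using lnd by (auto simp: quot_LND_def)
  then have "(delta z ^^ n) (monoL h 1) = 0" using psi_dvd[OF z] psi_D_iterate g by metis
  then have "(\<Prod>i<n. coeffL (U z) e * of_int (fst h + int i * fst e) + coeffL (V z) e * of_int (snd h + int i * snd e)) = 0"
    using euler_der_iterate_top[OF U V, of n h] by (simp add: delta_def)
  then show ?thesis by auto
qed

end

section \<open>Vanishing of the Euler coefficients\<close>

text \<open>Coefficients of the images of D X, D Y, D Z at a root of unity, shifted by an exponent e: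
  by Q = delta \<circ> psi they are c u, c v and zeta^l (a u + b v) for the coefficients u, v of
  U, V at e, and by coeffL_psi_root they are exponential sums in zeta^l.\<close>
lemma top_coeff_expansion_X:
  "of_nat c * coeffL (U (zeta c ^ l)) e =
     (\<Sum>k\<le>degree (D varX). psi_coeff (D varX) (int c + fst e, snd e) k * zeta c ^ (l * k))"
proof -
  have "psi (zeta c ^ l) (D varX) = U (zeta c ^ l) * monoL (int c, 0) (of_nat c)"
    using delta_X[OF zeta_root] by (simp add: Q_def delta_def euler_der_mono)
  then show ?thesis by (cases e) (simp add: coeffL_mult_mono flip: coeffL_psi_root)
qed

lemma top_coeff_expansion_Y:
  "of_nat c * coeffL (V (zeta c ^ l)) e =
     (\<Sum>k\<le>degree (D varY). psi_coeff (D varY) (fst e, int c + snd e) k * zeta c ^ (l * k))"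
proof -
  have "psi (zeta c ^ l) (D varY) = V (zeta c ^ l) * monoL (0, int c) (of_nat c)"
    using delta_Y[OF zeta_root] by (simp add: Q_def delta_def euler_der_mono)
  then show ?thesis by (cases e) (simp add: coeffL_mult_mono flip: coeffL_psi_root)
qed

lemma top_coeff_expansion_Z:
  "zeta c ^ l * (of_nat a * coeffL (U (zeta c ^ l)) e + of_nat b * coeffL (V (zeta c ^ l)) e) =
     (\<Sum>k\<le>degree (D varZ). psi_coeff (D varZ) (int a + fst e, int b + snd e) k * zeta c ^ (l * k))"
proof -
  have "psi (zeta c ^ l) (D varZ) = sZ (zeta c ^ l) * (of_nat a * U (zeta c ^ l) + of_nat b * V (zeta c ^ l))"
    using QZ_eq[OF zeta_root] by (simp add: Q_def)
  then show ?thesis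
    by (cases e) (simp add: coeffL_mono_mult Poly_Mapping.lookup_add coeffL_of_nat_mult flip: coeffL_psi_root)
qed

text \<open>Take e the lexicographically largest exponent occurring in any U (zeta^l) or V (zeta^l) and
  let u l, v l be the coefficients there.  Nilpotency on X and Y and the above expansions supply
  the hypotheses of top_coefficients_vanish; so u = v = 0, contradicting the choice of e.\<close>
lemma U_V_vanish: "\<forall>l<c. U (zeta c ^ l) = 0 \<and> V (zeta c ^ l) = 0"
proof -
  define T where "T = (\<Union>l<c. Poly_Mapping.keys (U (zeta c ^ l)) \<union> Poly_Mapping.keys (V (zeta c ^ l)))"
  have "T = {}"
  proof (rule ccontr)
    assume "T \<noteq> {}"
    moreover have "finite T" unfolding T_def by simp
    ultimately have eT: "Max T \<in> T" and top: "\<And>k. k \<in> T \<Longrightarrow> k \<le> Max T" by simp_all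
    define e where "e = Max T"
    have U: "exps_le (U (zeta c ^ l)) e" and V: "exps_le (V (zeta c ^ l)) e" if "l < c" for l
      using that top unfolding e_def T_def by blast+
    define u where "u l = coeffL (U (zeta c ^ l)) e" for l
    define v where "v l = coeffL (V (zeta c ^ l)) e" for l
    have "\<forall>l<c. u l = 0 \<and> v l = 0"
    proof (rule top_coefficients_vanish[OF a2 b2 c2, of u "fst e" v "snd e" "{..degree (D varX)}" _
          "{..degree (D varY)}" _ "{..degree (D varZ)}"])
      show "\<forall>l<c. \<exists>i::nat. u l * of_int (int c + int i * fst e) + v l * of_int (int i * snd e) = 0"
        using nilpotency_relation[OF zeta_root U V psi_X] by (simp add: u_def v_def)
      show "\<forall>l<c. \<exists>j::nat. u l * of_int (int j * fst e) + v l * of_int (int c + int j * snd e) = 0"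
        using nilpotency_relation[OF zeta_root U V psi_Y] by (simp add: u_def v_def)
    qed (auto simp: u_def v_def top_coeff_expansion_X top_coeff_expansion_Y top_coeff_expansion_Z
        dest!: psi_coeff_support)
    then show False using eT unfolding T_def u_def v_def e_def by (auto simp: Poly_Mapping.in_keys_iff)
  qed
  then show ?thesis unfolding T_def by auto
qed

theorem D_vanishes: "trinom dvd D g"
proof (rule trinom_dvd_if_psi_roots, intro allI impI)
  fix l assume "l < c"
  then have "delta (zeta c ^ l) = euler_der 0 0" using U_V_vanish by (simp add: delta_def)
  then show "psi (zeta c ^ l) (D g) = 0"
    using Q_eq_delta[OF zeta_root] by (simp add: Q_def euler_der_def)
qed

end

theorem theorem4p2:
  fixes a b c :: nat
  assumes "a \<ge> 2" and "b \<ge> 2" and "c \<ge> 2"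
  shows "quot_rigid (varX ^ a * varY ^ b - varZ ^ c)"
  unfolding quot_rigid_def
proof (intro allI impI)
  fix D g assume "quot_LND (varX ^ a * varY ^ b - varZ ^ c) D"
  then interpret quotient_lnd a b c D
    using assms by unfold_locales (simp_all add: trinomial.trinom_def[OF trinomial.intro[OF assms]])
  show "(varX ^ a * varY ^ b - varZ ^ c) dvd D g" using D_vanishes by (simp add: trinom_def)
qed

end
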